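(* Let $G=(V,q)$ be a finite connected reversible graph with non-negative Ollivier curvature, and let $\lambda_1$ be the smallest non-zero eigenvalue of $-\Delta$. Then \[ \lambda_1\ge\log(2)\cdot\frac{q_{\min}}{\operatorname{diam}(G)^2}, \] where $\operatorname{diam}(G)=\max\{d(x,y):x,y\in V\}$.
   Context: A graph $G=(V,q)$: $V$ finite, $q:V\times V\to[0,\infty)$; Laplacian $\Delta f(x)=\sum_yq(x,y)(f(y)-f(x))$. Reversible: there is $m:V\to(0,\infty)$ with $q(x,y)m(x)=q(y,x)m(y)$. $d$ is the combinatorial graph distance ($x\sim y$ iff $q(x,y)>0$). $q_{\min}=\min\{q(x,y):q(x,y)>0\}$. For $x\ne y$, $\nabla_{xy}f=(f(x)-f(y))/d(x,y)$, $\|\nabla f\|_\infty=\sup_{x\ne y}|\nabla_{xy}f|$. Ollivier curvature $\kappa(x,y)=\inf\{\nabla_{xy}\Delta f:\|\nabla f\|_\infty=1,\ \nabla_{yx}f=1\}$; non-negative means $\kappa(x,y)\ge0$ for all $x\ne y$. *)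

theory Defs
  imports Complex_Main
begin

definition laplacian :: "('a::finite \<Rightarrow> 'a \<Rightarrow> real) \<Rightarrow> ('a \<Rightarrow> real) \<Rightarrow> 'a \<Rightarrow> real" where
  "laplacian q f x = (\<Sum>y\<in>UNIV. q x y * (f y - f x))"

definition reversible :: "('a::finite \<Rightarrow> 'a \<Rightarrow> real) \<Rightarrow> bool" where
  "reversible q \<longleftrightarrow> (\<exists>m::'a \<Rightarrow> real. (\<forall>x. m x > 0) \<and> (\<forall>x y. q x y * m x = q y x * m y))"

definition adj :: "('a \<Rightarrow> 'a \<Rightarrow> real) \<Rightarrow> 'a \<Rightarrow> 'a \<Rightarrow> bool" where
  "adj q x y \<longleftrightarrow> q x y > 0"

definition gdist :: "('a \<Rightarrow> 'a \<Rightarrow> real) \<Rightarrow> 'a \<Rightarrow> 'a \<Rightarrow> nat" where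
  "gdist q x y = (LEAST n. (adj q ^^ n) x y)"

definition connected_graph :: "('a \<Rightarrow> 'a \<Rightarrow> real) \<Rightarrow> bool" where
  "connected_graph q \<longleftrightarrow> (\<forall>x y. \<exists>n. (adj q ^^ n) x y)"

definition qmin :: "('a::finite \<Rightarrow> 'a \<Rightarrow> real) \<Rightarrow> real" where
  "qmin q = Min {q x y | x y. q x y > 0}"

definition diam :: "('a::finite \<Rightarrow> 'a \<Rightarrow> real) \<Rightarrow> nat" where
  "diam q = Max {gdist q x y | x y. True}"

definition grad :: "('a \<Rightarrow> 'a \<Rightarrow> real) \<Rightarrow> ('a \<Rightarrow> real) \<Rightarrow> 'a \<Rightarrow> 'a \<Rightarrow> real" where
  "grad q f x y = (f x - f y) / real (gdist q x y)"

definition grad_norm :: "('a::finite \<Rightarrow> 'a \<Rightarrow> real) \<Rightarrow> ('a \<Rightarrow> real) \<Rightarrow> real" where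
  "grad_norm q f = Sup {\<bar>grad q f x y\<bar> | x y. x \<noteq> y}"

definition ollivier_curvature :: "('a::finite \<Rightarrow> 'a \<Rightarrow> real) \<Rightarrow> 'a \<Rightarrow> 'a \<Rightarrow> real" where
  "ollivier_curvature q x y =
     Inf {grad q (laplacian q f) x y | f. grad_norm q f = 1 \<and> grad q f y x = 1}"

definition nonneg_ollivier :: "('a::finite \<Rightarrow> 'a \<Rightarrow> real) \<Rightarrow> bool" where
  "nonneg_ollivier q \<longleftrightarrow> (\<forall>x y. x \<noteq> y \<longrightarrow> ollivier_curvature q x y \<ge> 0)"

text \<open>lam is an eigenvalue of -Delta (real eigenvalues; -Delta is self-adjoint in l^2(m)).\<close>
definition neg_lap_eigenvalue :: "('a::finite \<Rightarrow> 'a \<Rightarrow> real) \<Rightarrow> real \<Rightarrow> bool" where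
  "neg_lap_eigenvalue q lam \<longleftrightarrow>
     (\<exists>f. f \<noteq> (\<lambda>_. 0) \<and> (\<forall>x. - laplacian q f x = lam * f x))"

end

theory Submission
  imports Defs
begin

text \<open>
  Let \<open>f\<close> be an eigenfunction and \<open>h t = t (2N - t)\<close> with \<open>N = diam + 1\<close>, a concave modulus.
  Choose \<open>M\<close> minimal with \<open>f b - f a \<le> M h(d(a,b))\<close>, attained at a pair \<open>(x,y)\<close> at distance \<open>k\<close>.
  Subtracting a multiple \<open>s g\<close> of a suitable 1-Lipschitz function with \<open>g y - g x = k\<close> turns \<open>f\<close>
  into a function minimal at \<open>x\<close> and maximal at \<open>y\<close>; non-negative curvature gives
  \<open>\<Delta>g x \<ge> \<Delta>g y\<close>, and the strict concavity of \<open>h\<close> makes the remainder increase by \<open>2M\<close>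
  along the first and last edge of a geodesic from \<open>x\<close> to \<open>y\<close>. Hence
  \<open>\<lambda> M h(k) = \<Delta>f x - \<Delta>f y \<ge> 4 q\<^sub>m\<^sub>i\<^sub>n M\<close>, i.e. \<open>\<lambda> \<ge> 4 q\<^sub>m\<^sub>i\<^sub>n / N\<^sup>2\<close>, which is stronger than the claim.
\<close>

lemma adj_sym:
  assumes "reversible q" "adj q a b"
  shows "adj q b a"
proof -
  obtain m :: "'a \<Rightarrow> real" where m: "\<forall>x. m x > 0" "\<forall>x y. q x y * m x = q y x * m y"
    using assms(1) unfolding reversible_def by blast
  have "q b a * m b > 0"
    using assms(2) m unfolding adj_def by (metis mult_pos_pos)
  then show ?thesis
    using m(1)[rule_format, of b] unfolding adj_def by (auto simp add: zero_less_mult_iff)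
qed

lemma relpowp_sym:
  assumes "\<And>a b. R a b \<Longrightarrow> R b a"
  shows "(R ^^ n) a b \<Longrightarrow> (R ^^ n) b a"
proof (induction n arbitrary: a b)
  case 0
  then show ?case by (auto elim: relpowp_0_E)
next
  case (Suc n)
  then obtain c where "(R ^^ n) a c" "R c b" by (auto elim: relpowp_Suc_E)
  then show ?case using Suc.IH assms relpowp_Suc_I2 by metis
qed

lemma gdist_le: "(adj q ^^ n) a b \<Longrightarrow> gdist q a b \<le> n"
  unfolding gdist_def by (rule Least_le)

lemma gdist_self [simp]: "gdist q a a = 0"
  using gdist_le[of 0 q a a] by (simp add: relpowp_0_I)

lemma gdist_le_1_if_adj: "adj q a b \<Longrightarrow> gdist q a b \<le> 1"
  using gdist_le[of 1 q a b] by (metis relpowp_1)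

lemma finite_positive_rates: "finite {q x y | x y. q x y > 0}" for q :: "'a::finite \<Rightarrow> 'a \<Rightarrow> real"
  by (rule finite_subset[of _ "case_prod q ` UNIV"]) auto

lemma qmin_le: "q a b > 0 \<Longrightarrow> qmin q \<le> q a b"
  unfolding qmin_def by (rule Min_le[OF finite_positive_rates]) auto

lemma qmin_pos: "q a b > 0 \<Longrightarrow> qmin q > 0"
proof -
  assume "q a b > 0"
  then have "qmin q \<in> {q x y | x y. q x y > 0}"
    unfolding qmin_def by (intro Min_in[OF finite_positive_rates]) auto
  then show ?thesis by auto
qed

lemma gdist_le_diam: "gdist q a b \<le> diam q"
proof -
  have "finite {gdist q x y | x y. True}"
    by (rule finite_subset[of _ "case_prod (gdist q) ` UNIV"]) auto
  then show ?thesis unfolding diam_def by (rule Max_ge) auto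
qed

lemma laplacian_diff_scaled:
  "laplacian q (\<lambda>v. f v - s * g v) x = laplacian q f x - s * laplacian q g x"
proof -
  have "laplacian q (\<lambda>v. f v - s * g v) x
      = (\<Sum>y\<in>UNIV. q x y * (f y - f x) - s * (q x y * (g y - g x)))"
    unfolding laplacian_def by (rule sum.cong) (auto simp: algebra_simps)
  then show ?thesis unfolding laplacian_def by (simp add: sum_subtractf sum_distrib_left)
qed

lemma laplacian_ge_at_min:
  assumes "\<And>y z. q y z \<ge> 0" "\<And>v. u x \<le> u v"
  shows "q x z * (u z - u x) \<le> laplacian q u x"
  unfolding laplacian_def by (rule member_le_sum) (auto intro!: mult_nonneg_nonneg simp: assms)

lemma laplacian_le_at_max:
  assumes "\<And>y z. q y z \<ge> 0" "\<And>v. u v \<le> u y"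
  shows "laplacian q u y \<le> - q y z * (u y - u z)"
proof -
  have "q y z * (u y - u z) \<le> (\<Sum>v\<in>UNIV. q y v * (u y - u v))"
    by (rule member_le_sum) (auto intro!: mult_nonneg_nonneg simp: assms)
  also have "\<dots> = - laplacian q u y"
    unfolding laplacian_def sum_negf[symmetric] by (simp add: algebra_simps)
  finally show ?thesis by simp
qed

lemma eigenfunction_nonconstant:
  assumes "neg_lap_eigenvalue q lam" "lam \<noteq> 0"
  obtains f a b where "\<And>x. - laplacian q f x = lam * f x" "f a < f b"
proof -
  obtain f where f: "f \<noteq> (\<lambda>_. 0)" "\<And>x. - laplacian q f x = lam * f x"
    using assms(1) unfolding neg_lap_eigenvalue_def by blast
  have "\<exists>a b. f a < f b"
  proof (rule ccontr)
    assume "\<not> ?thesis"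
    then have const: "f y = f x" for x y by (meson not_less_iff_gr_or_eq)
    have "laplacian q f x = 0" for x
      unfolding laplacian_def by (rule sum.neutral) (metis const diff_self mult_zero_right)
    then have "\<And>x. f x = 0" using f(2) assms(2) by simp
    then show False using f(1) by auto
  qed
  then show ?thesis using that f(2) by blast
qed

lemma exists_max_difference_ratio:
  fixes f :: "'a::finite \<Rightarrow> real"
  assumes "f a < f b" and \<rho>_pos: "\<And>a b. a \<noteq> b \<Longrightarrow> \<rho> a b > 0"
  obtains x y M where "x \<noteq> y" "M > 0" "\<And>a b. a \<noteq> b \<Longrightarrow> f b - f a \<le> M * \<rho> a b"
    "f y - f x = M * \<rho> x y"
proof -
  define S where "S = {(f b - f a) / \<rho> a b | a b. a \<noteq> b}"
  have fin: "finite S"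
    unfolding S_def by (rule finite_subset[of _ "(\<lambda>(a, b). (f b - f a) / \<rho> a b) ` UNIV"]) auto
  have ab: "a \<noteq> b" "(f b - f a) / \<rho> a b \<in> S"
    using assms(1) unfolding S_def by auto
  have "Max S \<in> S" using fin ab by (intro Max_in) auto
  then obtain x y where xy: "x \<noteq> y" "Max S = (f y - f x) / \<rho> x y" unfolding S_def by blast
  have "0 < (f b - f a) / \<rho> a b" using assms(1) \<rho>_pos[OF ab(1)] by simp
  also have "\<dots> \<le> Max S" using fin ab by simp
  finally have "Max S > 0" .
  moreover have "f b' - f a' \<le> Max S * \<rho> a' b'" if "a' \<noteq> b'" for a' b'
  proof -
    have "(f b' - f a') / \<rho> a' b' \<le> Max S" using fin that unfolding S_def by (intro Max_ge) auto
    then show ?thesis using \<rho>_pos[OF that] by (simp add: divide_le_eq mult.commute)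
  qed
  moreover have "f y - f x = Max S * \<rho> x y" using xy \<rho>_pos[OF xy(1)] by simp
  ultimately show ?thesis using that xy(1) by blast
qed

lemma parabola_le_secant_nat:
  fixes t k :: nat and N :: real
  shows "real t * (2*N - real t) \<le> real k * (2*N - real k) + (2*N - 2*real k - 1) * (real t - real k)"
proof -
  have "(real t - real k) * (real t - real k - 1) \<ge> 0"
    by (cases "t \<le> k") (auto intro: mult_nonpos_nonpos mult_nonneg_nonneg)
  then show ?thesis by (simp add: algebra_simps)
qed

lemma ln2_div_sq_le:
  fixes D :: nat and Q :: real
  assumes "Q \<ge> 0"
  shows "ln 2 * Q / (real D)^2 \<le> 4 * Q / (real D + 1)^2"
proof (cases "D = 0")
  case True
  then show ?thesis using assms by simp
next
  case False
  then have D: "real D \<ge> 1" by simp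
  have "ln 2 * Q / (real D)^2 \<le> Q / (real D)^2"
    using mult_right_mono[of "ln 2" 1 Q] ln_2_less_1 assms by (intro divide_right_mono) auto
  also have "\<dots> \<le> 4 * Q / (real D + 1)^2"
  proof -
    have "(real D + 1)^2 = 4 * (real D)^2 - (real D - 1) * (3 * real D + 1)"
      by (simp add: power2_eq_square algebra_simps)
    moreover have "(real D - 1) * (3 * real D + 1) \<ge> 0" using D by simp
    ultimately have "(real D + 1)^2 \<le> 4 * (real D)^2" by linarith
    then have "Q * (real D + 1)^2 \<le> Q * (4 * (real D)^2)" using assms by (rule mult_left_mono)
    then show ?thesis using D by (simp add: divide_simps algebra_simps)
  qed
  finally show ?thesis .
qed

text \<open>One-sided, which suffices since \<open>gdist\<close> is symmetric on the graphs considered.\<close>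
definition gdist_lipschitz :: "('a \<Rightarrow> 'a \<Rightarrow> real) \<Rightarrow> ('a \<Rightarrow> real) \<Rightarrow> bool" where
  "gdist_lipschitz q g \<longleftrightarrow> (\<forall>a b. g a - g b \<le> real (gdist q a b))"

text \<open>The smallest 1-Lipschitz majorant of \<open>b\<close> (McShane extension).\<close>
definition lipschitz_envelope :: "('a::finite \<Rightarrow> 'a \<Rightarrow> real) \<Rightarrow> ('a \<Rightarrow> real) \<Rightarrow> 'a \<Rightarrow> real" where
  "lipschitz_envelope q b v = Max (range (\<lambda>w. b w - real (gdist q w v)))"

lemma lipschitz_envelope_ge: "b w - real (gdist q w v) \<le> lipschitz_envelope q b v"
  unfolding lipschitz_envelope_def by (rule Max_ge) auto

lemma lipschitz_envelope_le_iff: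
  "lipschitz_envelope q b v \<le> c \<longleftrightarrow> (\<forall>w. b w - real (gdist q w v) \<le> c)"
  unfolding lipschitz_envelope_def by auto

locale rate_graph =
  fixes q :: "'a::finite \<Rightarrow> 'a \<Rightarrow> real"
  assumes q_nonneg: "q x y \<ge> 0"
    and reversible: "reversible q"
    and connected: "connected_graph q"
begin

lemma gdist_walk: "(adj q ^^ gdist q a b) a b"
  using connected unfolding gdist_def connected_graph_def by (metis LeastI_ex)

lemma gdist_eq_0_iff [simp]: "gdist q a b = 0 \<longleftrightarrow> a = b"
  using gdist_walk[of a b] by (auto elim: relpowp_0_E)

lemma gdist_pos_iff [simp]: "0 < gdist q a b \<longleftrightarrow> a \<noteq> b"
  by (simp only: neq0_conv[symmetric] gdist_eq_0_iff)

lemma gdist_triangle: "gdist q a c \<le> gdist q a b + gdist q b c"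
  using gdist_walk[of a b] gdist_walk[of b c] relpowp_trans gdist_le by metis

lemma gdist_sym: "gdist q a b = gdist q b a"
  using gdist_walk[of a b] gdist_walk[of b a] relpowp_sym[of "adj q"] adj_sym[OF reversible] gdist_le
  by (metis le_antisym)

lemma gdist_geodesic_step:
  assumes "gdist q x y = Suc m"
  obtains x' where "adj q x x'" "gdist q x' y = m"
proof -
  obtain x' where x': "adj q x x'" "(adj q ^^ m) x' y"
    using relpowp_Suc_D2 gdist_walk[of x y] assms by fastforce
  have "gdist q x' y \<le> m" using x'(2) by (rule gdist_le)
  moreover have "gdist q x y \<le> gdist q x x' + gdist q x' y" by (rule gdist_triangle)
  ultimately have "gdist q x' y = m" using gdist_le_1_if_adj[OF x'(1)] assms by linarith
  then show ?thesis using that x'(1) by blast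
qed

lemma qmin_pos_if_distinct:
  fixes a b :: 'a
  assumes "a \<noteq> b"
  shows "qmin q > 0"
proof -
  obtain m where "gdist q a b = Suc m" using not0_implies_Suc[of "gdist q a b"] assms by auto
  then obtain a' where "adj q a a'" by (rule gdist_geodesic_step)
  then show ?thesis unfolding adj_def by (rule qmin_pos)
qed

lemma gdist_lipschitz_abs:
  assumes "gdist_lipschitz q g"
  shows "\<bar>g a - g b\<bar> \<le> real (gdist q a b)"
proof -
  have "g a - g b \<le> real (gdist q a b)" "g b - g a \<le> real (gdist q b a)"
    using assms unfolding gdist_lipschitz_def by blast+
  then show ?thesis using gdist_sym[of b a] by (simp add: abs_le_iff)
qed

lemma gdist_lipschitz_if_grad_norm:
  assumes "grad_norm q g = 1"
  shows "gdist_lipschitz q g"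
  unfolding gdist_lipschitz_def
proof (intro allI)
  fix a b
  show "g a - g b \<le> real (gdist q a b)"
  proof (cases "a = b")
    case False
    have fin: "finite {\<bar>grad q g a b\<bar> | a b. a \<noteq> b}"
      by (rule finite_subset[of _ "(\<lambda>(a, b). \<bar>grad q g a b\<bar>) ` UNIV"]) auto
    have "\<bar>grad q g a b\<bar> \<le> 1"
      unfolding assms[symmetric] grad_norm_def using False
      by (intro cSup_upper bdd_above_finite[OF fin]) auto
    moreover have "real (gdist q a b) > 0" using False by simp
    ultimately have "\<bar>g a - g b\<bar> \<le> real (gdist q a b)"
      by (simp add: grad_def abs_divide divide_le_eq)
    then show ?thesis by linarith
  qed simp
qed

lemma grad_norm_eq_1:
  assumes "gdist_lipschitz q g" "x \<noteq> y" "g y - g x = real (gdist q x y)"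
  shows "grad_norm q g = 1"
  unfolding grad_norm_def
proof (rule cSup_eq_non_empty)
  fix z assume "z \<in> {\<bar>grad q g a b\<bar> | a b. a \<noteq> b}"
  then obtain a b where "z = \<bar>grad q g a b\<bar>" "a \<noteq> b" by blast
  then show "z \<le> 1"
    using gdist_lipschitz_abs[OF assms(1), of a b] by (simp add: grad_def abs_divide divide_le_eq)
next
  fix w assume "\<And>z. z \<in> {\<bar>grad q g a b\<bar> | a b. a \<noteq> b} \<Longrightarrow> z \<le> w"
  moreover have "\<bar>grad q g y x\<bar> \<in> {\<bar>grad q g a b\<bar> | a b. a \<noteq> b}" using assms(2) by blast
  ultimately have "\<bar>grad q g y x\<bar> \<le> w" .
  then show "1 \<le> w" using assms(2,3) gdist_sym[of x y] by (simp add: grad_def)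
qed (use assms(2) in blast)

lemma laplacian_abs_le:
  assumes "gdist_lipschitz q g"
  shows "\<bar>laplacian q g x\<bar> \<le> (\<Sum>z\<in>UNIV. q x z * real (gdist q x z))"
  unfolding laplacian_def
proof (rule order_trans[OF sum_abs sum_mono])
  fix z
  show "\<bar>q x z * (g z - g x)\<bar> \<le> q x z * real (gdist q x z)"
    using gdist_lipschitz_abs[OF assms, of z x] gdist_sym[of z x] q_nonneg[of x z]
    by (simp add: abs_mult mult_left_mono)
qed

lemma bdd_below_curvature_set:
  assumes "x \<noteq> y"
  shows "bdd_below {grad q (laplacian q g) x y | g. grad_norm q g = 1 \<and> grad q g y x = 1}"
proof -
  define C where "C = (\<Sum>z\<in>UNIV. q x z * real (gdist q x z)) + (\<Sum>z\<in>UNIV. q y z * real (gdist q y z))"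
  have "- C / real (gdist q x y) \<le> grad q (laplacian q g) x y" if "grad_norm q g = 1" for g
  proof -
    have "- C \<le> laplacian q g x - laplacian q g y"
      using laplacian_abs_le[OF gdist_lipschitz_if_grad_norm[OF that], of x]
        laplacian_abs_le[OF gdist_lipschitz_if_grad_norm[OF that], of y]
      unfolding C_def by (simp add: abs_le_iff)
    from divide_right_mono[OF this, of "real (gdist q x y)"] show ?thesis
      unfolding grad_def by simp
  qed
  then show ?thesis by (auto intro!: bdd_belowI[where m = "- C / real (gdist q x y)"])
qed

lemma laplacian_le_if_nonneg_ollivier:
  assumes "nonneg_ollivier q" "gdist_lipschitz q g" "x \<noteq> y" "g y - g x = real (gdist q x y)"
  shows "laplacian q g y \<le> laplacian q g x"
proof -
  have "grad q g y x = 1" using assms(3,4) gdist_sym[of x y] by (simp add: grad_def)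
  moreover have "grad_norm q g = 1" using grad_norm_eq_1 assms(2-4) .
  ultimately have "ollivier_curvature q x y \<le> grad q (laplacian q g) x y"
    unfolding ollivier_curvature_def
    by (intro cInf_lower[OF _ bdd_below_curvature_set[OF assms(3)]]) blast
  then have "0 \<le> (laplacian q g x - laplacian q g y) / real (gdist q x y)"
    using assms(1,3) unfolding nonneg_ollivier_def grad_def by force
  then show ?thesis using assms(3) by (simp add: zero_le_divide_iff)
qed

lemma gdist_lipschitz_envelope: "gdist_lipschitz q (lipschitz_envelope q b)"
  unfolding gdist_lipschitz_def
proof (intro allI)
  fix v v'
  have "b w - real (gdist q w v) \<le> lipschitz_envelope q b v' + real (gdist q v v')" for w
  proof -
    have "real (gdist q w v') \<le> real (gdist q w v) + real (gdist q v v')"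
      using gdist_triangle[where a = w and b = v and c = v'] by linarith
    moreover have "b w - real (gdist q w v') \<le> lipschitz_envelope q b v'"
      by (rule lipschitz_envelope_ge)
    ultimately show ?thesis by linarith
  qed
  then have "lipschitz_envelope q b v \<le> lipschitz_envelope q b v' + real (gdist q v v')"
    by (simp add: lipschitz_envelope_le_iff)
  then show "lipschitz_envelope q b v - lipschitz_envelope q b v' \<le> real (gdist q v v')"
    by simp
qed

text \<open>
  With \<open>s = M c\<close> and \<open>g\<close> the Lipschitz envelope of \<open>(f - f y) / s\<close>, the function \<open>f - s g\<close>
  is minimal at \<open>x\<close> (this is where the secant bound on the modulus \<open>h\<close> enters) and maximal at \<open>y\<close>.
\<close>
lemma exists_calibrating_lipschitz:
  assumes bound: "\<And>a b. f b - f a \<le> M * h (gdist q a b)"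
    and attained: "f y - f x = M * h (gdist q x y)"
    and secant: "\<And>t. h t \<le> h (gdist q x y) + c * (real t - real (gdist q x y))"
    and "M > 0" "c > 0"
  obtains g where "gdist_lipschitz q g" "g y - g x = real (gdist q x y)"
    "\<And>v. f x - M * c * g x \<le> f v - M * c * g v"
    "\<And>v. f v - M * c * g v \<le> f y - M * c * g y"
proof -
  define k where "k = real (gdist q x y)"
  define s where "s = M * c"
  have s: "s > 0" unfolding s_def using assms(4,5) by simp
  define g where "g = lipschitz_envelope q (\<lambda>v. (f v - f y) / s)"
  have lip: "gdist_lipschitz q g" unfolding g_def by (rule gdist_lipschitz_envelope)
  have lower: "(f w - f y) / s - real (gdist q w v) \<le> g v" for v w
    unfolding g_def by (rule lipschitz_envelope_ge)
  have upper: "g v \<le> (f v - f x) / s - k" for v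
    unfolding g_def lipschitz_envelope_le_iff
  proof
    fix w
    have "f w - f v \<le> M * h (gdist q v w)" by (rule bound)
    also have "\<dots> \<le> M * (h (gdist q x y) + c * (real (gdist q v w) - k))"
      using secant \<open>M > 0\<close> unfolding k_def by (intro mult_left_mono) auto
    finally have "f w - f v \<le> M * (h (gdist q x y) + c * (real (gdist q v w) - k))" .
    then have "f w - f y - s * real (gdist q w v) \<le> f v - f x - s * k"
      using attained gdist_sym[of v w] unfolding s_def k_def by (simp add: algebra_simps)
    then have "(f w - f y - s * real (gdist q w v)) / s \<le> (f v - f x - s * k) / s"
      using s by (simp add: divide_right_mono)
    then show "(f w - f y) / s - real (gdist q w v) \<le> (f v - f x) / s - k"
      using s by (simp add: diff_divide_distrib)
  qed
  have gx: "g x = - k" using upper[of x] lower[of y x] gdist_sym[of x y] unfolding k_def by simp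
  have gy: "g y = 0"
  proof -
    have "g y - g x \<le> real (gdist q y x)" using lip unfolding gdist_lipschitz_def by blast
    moreover have "0 \<le> g y" using lower[of y y] by simp
    ultimately show ?thesis using gx gdist_sym[of x y] unfolding k_def by simp
  qed
  show ?thesis
  proof (rule that[OF lip])
    show "g y - g x = real (gdist q x y)" using gx gy unfolding k_def by simp
    show "f x - M * c * g x \<le> f v - M * c * g v" for v
    proof -
      have "s * g v \<le> s * ((f v - f x) / s - k)" using upper[of v] s by simp
      also have "\<dots> = f v - f x - s * k" using s by (simp add: field_simps)
      finally show ?thesis using gx unfolding s_def by simp
    qed
    show "f v - M * c * g v \<le> f y - M * c * g y" for v
    proof -
      have "f v - f y = s * ((f v - f y) / s - real (gdist q v v))" using s by simp
      also have "\<dots> \<le> s * g v" using mult_left_mono[OF lower[of v v], of s] s by simp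
      finally show ?thesis using gy unfolding s_def by simp
    qed
  qed
qed

text \<open>
  The gain comes from the first and the last edge of a geodesic from \<open>x\<close> to \<open>y\<close>, along each of
  which \<open>f - M c g\<close> rises by at least \<open>M (h k - h (k - 1) - c)\<close>; hence the factor 2.
\<close>
lemma laplacian_gap_of_modulus:
  assumes curv: "nonneg_ollivier q" and "x \<noteq> y"
    and bound: "\<And>a b. f b - f a \<le> M * h (gdist q a b)"
    and attained: "f y - f x = M * h (gdist q x y)"
    and secant: "\<And>t. h t \<le> h (gdist q x y) + c * (real t - real (gdist q x y))"
    and "M > 0" "c > 0"
  shows "2 * qmin q * (M * (h (gdist q x y) - h (gdist q x y - 1) - c))
           \<le> laplacian q f x - laplacian q f y"
proof -
  obtain g where lip: "gdist_lipschitz q g" and gxy: "g y - g x = real (gdist q x y)"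
    and min: "\<And>v. f x - M * c * g x \<le> f v - M * c * g v"
    and max: "\<And>v. f v - M * c * g v \<le> f y - M * c * g y"
    using exists_calibrating_lipschitz[OF bound attained secant assms(6,7)] by blast
  define s where "s = M * c"
  have s: "s \<ge> 0" unfolding s_def using assms(6,7) by simp
  define u where "u = (\<lambda>v. f v - s * g v)"
  obtain m where m: "gdist q x y = Suc m" using not0_implies_Suc[of "gdist q x y"] \<open>x \<noteq> y\<close> by auto
  obtain x' where x': "adj q x x'" "gdist q x' y = m" using gdist_geodesic_step[OF m] .
  obtain y' where y': "adj q y y'" "gdist q y' x = m"
    using gdist_geodesic_step m gdist_sym[of x y] by metis
  define \<delta> where "\<delta> = M * (h (Suc m) - h m - c)"
  have \<delta>: "\<delta> \<ge> 0" unfolding \<delta>_def using secant[of m] m \<open>M > 0\<close> by simp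
  have \<delta>_eq: "\<delta> = (f y - f x) - M * h m - s"
    unfolding \<delta>_def s_def using attained m by (simp add: algebra_simps)
  have "u x' - u x \<ge> \<delta>"
  proof -
    have "g x' - g x \<le> real (gdist q x' x)" using lip unfolding gdist_lipschitz_def by blast
    also have "\<dots> \<le> 1" using gdist_le_1_if_adj[OF x'(1)] gdist_sym[of x x'] by simp
    finally have "s * (g x' - g x) \<le> s" using s by (simp add: mult_left_le)
    moreover have "f y - f x' \<le> M * h m" using bound[of y x'] x'(2) by simp
    ultimately show ?thesis unfolding u_def \<delta>_eq by (simp add: algebra_simps)
  qed
  have "u y - u y' \<ge> \<delta>"
  proof -
    have "g y - g y' \<le> real (gdist q y y')" using lip unfolding gdist_lipschitz_def by blast
    also have "\<dots> \<le> 1" using gdist_le_1_if_adj[OF y'(1)] by simp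
    finally have "s * (g y - g y') \<le> s" using s by (simp add: mult_left_le)
    moreover have "f y' - f x \<le> M * h m" using bound[of y' x] y'(2) gdist_sym[of x y'] by simp
    ultimately show ?thesis unfolding u_def \<delta>_eq by (simp add: algebra_simps)
  qed
  have "qmin q * \<delta> \<le> q x x' * \<delta>"
    using qmin_le[of q x x'] x'(1) \<delta> unfolding adj_def by (simp add: mult_right_mono)
  also have "\<dots> \<le> q x x' * (u x' - u x)"
    using \<open>u x' - u x \<ge> \<delta>\<close> q_nonneg by (simp add: mult_left_mono)
  also have "\<dots> \<le> laplacian q u x"
    using min by (intro laplacian_ge_at_min q_nonneg) (simp add: u_def s_def)
  finally have lap_x: "qmin q * \<delta> \<le> laplacian q u x" .
  have "laplacian q u y \<le> - q y y' * (u y - u y')"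
    using max by (intro laplacian_le_at_max q_nonneg) (simp add: u_def s_def)
  also have "\<dots> \<le> - (q y y' * \<delta>)"
    using \<open>u y - u y' \<ge> \<delta>\<close> q_nonneg by (simp add: mult_left_mono)
  also have "\<dots> \<le> - (qmin q * \<delta>)"
    using qmin_le[of q y y'] y'(1) \<delta> unfolding adj_def by (simp add: mult_right_mono)
  finally have lap_y: "laplacian q u y \<le> - (qmin q * \<delta>)" .
  have "s * laplacian q g y \<le> s * laplacian q g x"
    using laplacian_le_if_nonneg_ollivier[OF curv lip \<open>x \<noteq> y\<close> gxy] s by (rule mult_left_mono)
  moreover have "laplacian q f v = laplacian q u v + s * laplacian q g v" for v
    using laplacian_diff_scaled[of q f s g v] unfolding u_def by simp
  ultimately show ?thesis
    using lap_x lap_y m unfolding \<delta>_def by simp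
qed

lemma eigenvalue_lower_bound:
  assumes curv: "nonneg_ollivier q"
    and eigen: "\<And>x. - laplacian q f x = lam * f x" and "f a < f b"
  shows "4 * qmin q / (real (diam q) + 1)^2 \<le> lam"
proof -
  define N where "N = real (diam q) + 1"
  define h where "h t = real t * (2 * N - real t)" for t
  have h_pos: "h (gdist q v w) > 0" if "v \<noteq> w" for v w
    using that gdist_le_diam[of q v w] unfolding h_def N_def by simp
  obtain x y M where xy: "x \<noteq> y" and "M > 0"
    and ratio: "\<And>v w. v \<noteq> w \<Longrightarrow> f w - f v \<le> M * h (gdist q v w)"
    and attained: "f y - f x = M * h (gdist q x y)"
    using exists_max_difference_ratio[of f a b "\<lambda>v w. h (gdist q v w)"] \<open>f a < f b\<close> h_pos
    by blast
  have bound: "f w - f v \<le> M * h (gdist q v w)" for v w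
    using ratio[of v w] by (cases "v = w") (simp_all add: h_def)
  define k where "k = gdist q x y"
  have k: "1 \<le> k" "k \<le> diam q" using xy gdist_le_diam[of q x y] unfolding k_def by (auto simp: Suc_le_eq)
  have secant: "h t \<le> h k + (2 * N - 2 * real k - 1) * (real t - real k)" for t
    unfolding h_def by (rule parabola_le_secant_nat)
  have slope_pos: "2 * N - 2 * real k - 1 > 0" using k(2) unfolding N_def by simp
  have last_step: "h k - h (k - 1) - (2 * N - 2 * real k - 1) = 2"
    using k(1) unfolding h_def by (simp add: of_nat_diff algebra_simps)
  have "2 * qmin q * (M * 2) \<le> laplacian q f x - laplacian q f y"
    using laplacian_gap_of_modulus[OF curv xy bound attained
        secant[unfolded k_def] \<open>M > 0\<close> slope_pos[unfolded k_def], folded k_def]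
    unfolding last_step .
  also have "\<dots> = lam * h k * M" using eigen[of x] eigen[of y] attained unfolding k_def
    by (simp add: algebra_simps)
  finally have lam_h: "4 * qmin q \<le> lam * h k" using \<open>M > 0\<close> by simp
  have "N^2 - h k = (N - real k)^2" unfolding h_def by (simp add: power2_eq_square algebra_simps)
  then have "h k \<le> N^2" by (metis diff_ge_0_iff_ge zero_le_power2)
  moreover have "0 < h k" using h_pos[OF xy] unfolding k_def .
  moreover have "0 < qmin q" using qmin_pos_if_distinct[OF xy] .
  ultimately have "4 * qmin q / N^2 \<le> 4 * qmin q / h k"
    by (intro divide_left_mono mult_pos_pos) auto
  also have "\<dots> \<le> lam" using lam_h \<open>0 < h k\<close> by (simp add: pos_divide_le_eq)
  finally show ?thesis unfolding N_def .
qed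

end

theorem mainTheorem17:
  fixes q :: "'a::finite \<Rightarrow> 'a \<Rightarrow> real"
  assumes "\<forall>x y. q x y \<ge> 0"
    and "reversible q"
    and "connected_graph q"
    and "nonneg_ollivier q"
    and "neg_lap_eigenvalue q lam" and "lam \<noteq> 0"
  shows "lam \<ge> ln 2 * qmin q / (real (diam q))^2"
proof -
  interpret rate_graph q
    using assms(1-3) by unfold_locales auto
  obtain f a b where eigen: "\<And>x. - laplacian q f x = lam * f x" and "f a < f b"
    using eigenfunction_nonconstant[OF assms(5,6)] by blast
  have "a \<noteq> b" using \<open>f a < f b\<close> by auto
  then have "0 < qmin q" by (rule qmin_pos_if_distinct)
  then have "ln 2 * qmin q / (real (diam q))^2 \<le> 4 * qmin q / (real (diam q) + 1)^2"
    by (intro ln2_div_sq_le) simp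
  also have "\<dots> \<le> lam"
    using eigenvalue_lower_bound[OF assms(4) eigen \<open>f a < f b\<close>] .
  finally show ?thesis .
qed

end
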